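(* Let $\mathcal{H}$ be a finite-dimensional complex Hilbert space and let $L(\mathcal{H})$ be the space of linear operators on $\mathcal{H}$ with the Hilbert–Schmidt inner product. Let $U$ be a unitary operator on $\mathcal{H}$ and $A_1,\dots,A_n$ operators on $\mathcal{H}$ forming unital measurements, i.e. $\sum_jA_j^*A_j=I$ and $\sum_jA_jA_j^*=I$. Define linear maps on $L(\mathcal{H})$ by $C(\rho)=U\rho U^*$, $D(\rho)=\sum_{j=1}^nA_j\rho A_j^*$, and $\mathcal{L}(\rho)=qC(\rho)+pD(\rho)$ with $0<p,q<1$, $p+q=1$. If $\lambda=1$ is the only eigenvalue of $D$ with $|\lambda|=1$, then $\lambda=1$ is the only eigenvalue of $\mathcal{L}$ with $|\lambda|=1$. Moreover, if $1$ is an eigenvalue of $D$ of algebraic multiplicity $1$, then $1$ is an eigenvalue of $\mathcal{L}$ of algebraic multiplicity $1$. *)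

theory Defs
  imports "Jordan_Normal_Form.Schur_Decomposition" "Jordan_Normal_Form.Char_Poly"
begin

text \<open>Operators on the n-dimensional complex Hilbert space H = C^n are n x n complex
matrices; L(H) is carrier_mat n n. Superoperators are maps complex mat => complex mat.\<close>

fun msum :: "nat \<Rightarrow> (nat \<Rightarrow> complex mat) \<Rightarrow> nat \<Rightarrow> complex mat" where
  "msum n f 0 = 0\<^sub>m n n"
| "msum n f (Suc k) = msum n f k + f k"

definition unitary_op :: "nat \<Rightarrow> complex mat \<Rightarrow> bool" where
  "unitary_op n U \<longleftrightarrow> U \<in> carrier_mat n n \<and> U * mat_adjoint U = 1\<^sub>m n \<and> mat_adjoint U * U = 1\<^sub>m n"

definition so_eigenvalue :: "nat \<Rightarrow> (complex mat \<Rightarrow> complex mat) \<Rightarrow> complex \<Rightarrow> bool" where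
  "so_eigenvalue n T l \<longleftrightarrow> (\<exists>\<rho> \<in> carrier_mat n n. \<rho> \<noteq> 0\<^sub>m n n \<and> T \<rho> = l \<cdot>\<^sub>m \<rho>)"

definition mat_unit :: "nat \<Rightarrow> nat \<Rightarrow> nat \<Rightarrow> complex mat" where
  "mat_unit n k l = mat n n (\<lambda>(i,j). if i = k \<and> j = l then 1 else 0)"

text \<open>Matrix of a linear map T on L(H) with respect to the basis of matrix units,
  index (i,j) encoded as i*n+j.\<close>
definition so_matrix :: "nat \<Rightarrow> (complex mat \<Rightarrow> complex mat) \<Rightarrow> complex mat" where
  "so_matrix n T = mat (n*n) (n*n)
     (\<lambda>(r,c). T (mat_unit n (c div n) (c mod n)) $$ (r div n, r mod n))"

definition alg_mult :: "nat \<Rightarrow> (complex mat \<Rightarrow> complex mat) \<Rightarrow> complex \<Rightarrow> nat" where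
  "alg_mult n T l = order l (char_poly (so_matrix n T))"

end

theory Submission
  imports Defs "Jordan_Normal_Form.Jordan_Normal_Form_Uniqueness" "Jordan_Normal_Form.Jordan_Normal_Form_Existence"
begin

text \<open>
  In the Hilbert--Schmidt norm the conjugation \<open>C\<close> is an isometry and the unital channel \<open>D\<close> is a
  contraction. By strict convexity of the norm, \<open>L \<rho> = \<lambda> \<rho>\<close> with \<open>|\<lambda>| = 1\<close> forces
  \<open>C \<rho> = D \<rho> = \<lambda> \<rho>\<close>, so every peripheral eigenvalue of \<open>L\<close> is one of \<open>D\<close>.

  Since \<open>D I = I\<close>, simplicity of the eigenvalue \<open>1\<close> of \<open>D\<close> makes the fixed points of \<open>D\<close>, and hence
  those of \<open>L\<close>, the multiples of \<open>I\<close>. If \<open>(L - 1)\<^sup>2 \<rho> = 0\<close>, then \<open>L \<rho> - \<rho>\<close> is such a fixed point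
  and it is traceless because \<open>L\<close> preserves traces; so \<open>L \<rho> = \<rho>\<close>. Thus the second generalised
  eigenspace of \<open>L\<close> for \<open>1\<close> is spanned by \<open>I\<close>, and the Jordan normal form of the matrix of \<open>L\<close>
  shows that \<open>1\<close> has algebraic multiplicity one.
\<close>

section \<open>Adjoints, traces and finite sums of matrices\<close>

lemma dim_mat_adjoint [simp]:
  "dim_row (mat_adjoint (A :: complex mat)) = dim_col A"
  "dim_col (mat_adjoint (A :: complex mat)) = dim_row A"
  by (simp_all add: mat_adjoint_def)

lemma mat_adjoint_carrier [simp]:
  "(A :: complex mat) \<in> carrier_mat a b \<Longrightarrow> mat_adjoint A \<in> carrier_mat b a"
  by (rule carrier_matI) simp_all

lemma index_mat_adjoint [simp]:
  "i < dim_col A \<Longrightarrow> j < dim_row A \<Longrightarrow> mat_adjoint (A :: complex mat) $$ (i, j) = cnj (A $$ (j, i))"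
  unfolding mat_adjoint_def mat_of_rows_def by simp

lemma mat_adjoint_adjoint [simp]: "mat_adjoint (mat_adjoint (A :: complex mat)) = A"
  by (rule eq_matI) simp_all

lemma mat_adjoint_mult:
  assumes "(A :: complex mat) \<in> carrier_mat a b" and "B \<in> carrier_mat b c"
  shows "mat_adjoint (A * B) = mat_adjoint B * mat_adjoint A"
  using assms by (intro eq_matI) (simp_all add: scalar_prod_def cnj_sum mult.commute)

lemma mat_adjoint_add:
  assumes "(A :: complex mat) \<in> carrier_mat a b" and "B \<in> carrier_mat a b"
  shows "mat_adjoint (A + B) = mat_adjoint A + mat_adjoint B"
  using assms by (intro eq_matI) simp_all

lemma mat_adjoint_zero [simp]: "mat_adjoint (0\<^sub>m a b :: complex mat) = 0\<^sub>m b a"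
  unfolding mat_adjoint_def mat_of_rows_def by (rule eq_matI) auto

lemma mult_carrier_mat_square [simp]:
  "A \<in> carrier_mat n n \<Longrightarrow> B \<in> carrier_mat n n \<Longrightarrow> A * B \<in> carrier_mat n n"
  by (rule mult_carrier_mat)

lemma mat_adjoint_conj:
  assumes "(A :: complex mat) \<in> carrier_mat n n" and "X \<in> carrier_mat n n"
  shows "mat_adjoint (A * X * mat_adjoint A) = A * mat_adjoint X * mat_adjoint A"
  using assms by (simp add: mat_adjoint_mult[of _ n n _ n] assoc_mult_mat[of _ n n _ n _ n])

lemma one_smult_mat [simp]: "(1 :: 'a :: semiring_1) \<cdot>\<^sub>m A = A"
  by (rule eq_matI) simp_all

lemma minus_mat_eq_0_iff:
  assumes A: "(A :: 'a :: group_add mat) \<in> carrier_mat nr nc" and B: "B \<in> carrier_mat nr nc"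
  shows "A - B = 0\<^sub>m nr nc \<longleftrightarrow> A = B"
proof
  assume diff: "A - B = 0\<^sub>m nr nc"
  show "A = B"
  proof (rule eq_matI)
    fix i j assume ij: "i < dim_row B" "j < dim_col B"
    then have "(A - B) $$ (i, j) = 0" using diff B by simp
    then show "A $$ (i, j) = B $$ (i, j)" using ij A B by simp
  qed (use A B in simp_all)
qed (use A in simp)

definition mat_trace :: "'a :: comm_ring_1 mat \<Rightarrow> 'a" where
  "mat_trace A = (\<Sum>i<dim_row A. A $$ (i, i))"

lemma mat_trace_mult_comm:
  assumes A: "(A :: 'a :: comm_ring_1 mat) \<in> carrier_mat a b" and B: "B \<in> carrier_mat b a"
  shows "mat_trace (A * B) = mat_trace (B * A)"
proof -
  have "mat_trace (A * B) = (\<Sum>i<a. \<Sum>k<b. A $$ (i, k) * B $$ (k, i))"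
    using A B unfolding mat_trace_def by (simp add: scalar_prod_def atLeast0LessThan)
  also have "\<dots> = (\<Sum>k<b. \<Sum>i<a. B $$ (k, i) * A $$ (i, k))"
    by (subst sum.swap) (simp add: mult.commute)
  also have "\<dots> = mat_trace (B * A)"
    using A B unfolding mat_trace_def by (simp add: scalar_prod_def atLeast0LessThan)
  finally show ?thesis .
qed

lemma mat_trace_mult_cycle:
  assumes "(A :: 'a :: comm_ring_1 mat) \<in> carrier_mat n n" "B \<in> carrier_mat n n" "C \<in> carrier_mat n n"
  shows "mat_trace (A * B * C) = mat_trace (B * C * A)"
  using assms mat_trace_mult_comm[of A n n "B * C"] by (simp add: assoc_mult_mat[of _ n n _ n _ n])

lemma mat_trace_add:
  "(A :: 'a :: comm_ring_1 mat) \<in> carrier_mat n n \<Longrightarrow> B \<in> carrier_mat n n \<Longrightarrow>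
   mat_trace (A + B) = mat_trace A + mat_trace B"
  unfolding mat_trace_def by (simp add: sum.distrib)

lemma mat_trace_minus:
  "(A :: 'a :: comm_ring_1 mat) \<in> carrier_mat n n \<Longrightarrow> B \<in> carrier_mat n n \<Longrightarrow>
   mat_trace (A - B) = mat_trace A - mat_trace B"
  unfolding mat_trace_def by (simp add: sum_subtractf)

lemma mat_trace_smult:
  "(A :: 'a :: comm_ring_1 mat) \<in> carrier_mat n n \<Longrightarrow> mat_trace (c \<cdot>\<^sub>m A) = c * mat_trace A"
  unfolding mat_trace_def by (simp add: sum_distrib_left)

lemma mat_trace_one: "mat_trace (1\<^sub>m n :: 'a :: comm_ring_1 mat) = of_nat n"
  unfolding mat_trace_def by simp

lemma msum_carrier [simp]:
  "(\<And>k. k < m \<Longrightarrow> f k \<in> carrier_mat n n) \<Longrightarrow> msum n f m \<in> carrier_mat n n"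
  by (induct m) simp_all

lemma dim_msum:
  assumes "\<And>k. k < m \<Longrightarrow> f k \<in> carrier_mat n n"
  shows "dim_row (msum n f m) = n" "dim_col (msum n f m) = n"
  using carrier_matD[OF msum_carrier[OF assms]] by simp_all

lemma index_msum:
  assumes "\<And>k. k < m \<Longrightarrow> f k \<in> carrier_mat n n" and "i < n" "j < n"
  shows "msum n f m $$ (i, j) = (\<Sum>k<m. f k $$ (i, j))"
  using assms(1)
proof (induct m)
  case (Suc m)
  then have M: "msum n f m \<in> carrier_mat n n" and F: "f m \<in> carrier_mat n n" by simp_all
  with Suc assms(2,3) show ?case by (simp add: carrier_matD[OF M] carrier_matD[OF F])
qed (use assms in simp)

lemma msum_cong: "(\<And>k. k < m \<Longrightarrow> f k = g k) \<Longrightarrow> msum n f m = msum n g m"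
  by (induct m) simp_all

lemma msum_add:
  assumes f: "\<And>k. k < m \<Longrightarrow> f k \<in> carrier_mat n n" and g: "\<And>k. k < m \<Longrightarrow> g k \<in> carrier_mat n n"
  shows "msum n (\<lambda>k. f k + g k) m = msum n f m + msum n g m"
proof (rule eq_matI)
  have fg: "\<And>k. k < m \<Longrightarrow> f k + g k \<in> carrier_mat n n" using f g by simp
  show "dim_row (msum n (\<lambda>k. f k + g k) m) = dim_row (msum n f m + msum n g m)"
    "dim_col (msum n (\<lambda>k. f k + g k) m) = dim_col (msum n f m + msum n g m)"
    using dim_msum[OF fg] dim_msum[OF g] by simp_all
  fix i j assume "i < dim_row (msum n f m + msum n g m)" "j < dim_col (msum n f m + msum n g m)"
  then have ij: "i < n" "j < n" using dim_msum[OF g] by simp_all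
  have "(f k + g k) $$ (i, j) = f k $$ (i, j) + g k $$ (i, j)" if "k < m" for k
    using g[OF that] ij by simp
  then have "msum n (\<lambda>k. f k + g k) m $$ (i, j) = (\<Sum>k<m. f k $$ (i, j) + g k $$ (i, j))"
    by (simp add: index_msum[OF fg ij])
  also have "\<dots> = (msum n f m + msum n g m) $$ (i, j)"
    using ij dim_msum[OF g] by (simp add: index_msum[OF f ij] index_msum[OF g ij] sum.distrib)
  finally show "msum n (\<lambda>k. f k + g k) m $$ (i, j) = (msum n f m + msum n g m) $$ (i, j)" .
qed

lemma msum_smult:
  assumes f: "\<And>k. k < m \<Longrightarrow> f k \<in> carrier_mat n n"
  shows "msum n (\<lambda>k. c \<cdot>\<^sub>m f k) m = c \<cdot>\<^sub>m msum n f m"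
proof (rule eq_matI)
  have cf: "\<And>k. k < m \<Longrightarrow> c \<cdot>\<^sub>m f k \<in> carrier_mat n n" using f by simp
  show "dim_row (msum n (\<lambda>k. c \<cdot>\<^sub>m f k) m) = dim_row (c \<cdot>\<^sub>m msum n f m)"
    "dim_col (msum n (\<lambda>k. c \<cdot>\<^sub>m f k) m) = dim_col (c \<cdot>\<^sub>m msum n f m)"
    using dim_msum[OF cf] dim_msum[OF f] by simp_all
  fix i j assume "i < dim_row (c \<cdot>\<^sub>m msum n f m)" "j < dim_col (c \<cdot>\<^sub>m msum n f m)"
  then have ij: "i < n" "j < n" using dim_msum[OF f] by simp_all
  have "(c \<cdot>\<^sub>m f k) $$ (i, j) = c * f k $$ (i, j)" if "k < m" for k
    using f[OF that] ij by simp
  then have "msum n (\<lambda>k. c \<cdot>\<^sub>m f k) m $$ (i, j) = (\<Sum>k<m. c * f k $$ (i, j))"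
    by (simp add: index_msum[OF cf ij])
  also have "\<dots> = (c \<cdot>\<^sub>m msum n f m) $$ (i, j)"
    using ij dim_msum[OF f] by (simp add: index_msum[OF f ij] sum_distrib_left)
  finally show "msum n (\<lambda>k. c \<cdot>\<^sub>m f k) m $$ (i, j) = (c \<cdot>\<^sub>m msum n f m) $$ (i, j)" .
qed

lemma mat_trace_msum:
  assumes "\<And>k. k < m \<Longrightarrow> f k \<in> carrier_mat n n"
  shows "mat_trace (msum n f m) = (\<Sum>k<m. mat_trace (f k))"
proof -
  have "mat_trace (msum n f m) = (\<Sum>i<n. \<Sum>k<m. f k $$ (i, i))"
    using assms unfolding mat_trace_def by (simp add: index_msum dim_msum[OF assms])
  also have "\<dots> = (\<Sum>k<m. \<Sum>i<n. f k $$ (i, i))"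
    by (rule sum.swap)
  also have "\<dots> = (\<Sum>k<m. mat_trace (f k))"
    using assms unfolding mat_trace_def by (intro sum.cong) auto
  finally show ?thesis .
qed

lemma mult_msum_mult:
  assumes "P \<in> carrier_mat n n" "Q \<in> carrier_mat n n" and "\<And>k. k < m \<Longrightarrow> f k \<in> carrier_mat n n"
  shows "P * msum n f m * Q = msum n (\<lambda>k. P * f k * Q) m"
  using assms(3)
proof (induct m)
  case (Suc m)
  then have f: "msum n f m \<in> carrier_mat n n" "f m \<in> carrier_mat n n" by simp_all
  have "P * msum n f (Suc m) * Q = P * msum n f m * Q + P * f m * Q"
    using assms(1,2) f by (simp add: mult_add_distrib_mat[of P n n] add_mult_distrib_mat[of _ n n _ Q n])
  also have "P * msum n f m * Q = msum n (\<lambda>k. P * f k * Q) m"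
    using Suc.prems by (intro Suc.hyps) simp
  finally show ?case by (simp only: msum.simps)
qed (use assms in simp)

lemma mat_trace_mult_msum_mult:
  assumes "P \<in> carrier_mat n n" "Q \<in> carrier_mat n n" and "\<And>k. k < m \<Longrightarrow> f k \<in> carrier_mat n n"
  shows "mat_trace (P * msum n f m * Q) = (\<Sum>k<m. mat_trace (P * f k * Q))"
  using assms by (simp add: mult_msum_mult mat_trace_msum)

lemma mat_adjoint_msum:
  "(\<And>k. k < m \<Longrightarrow> f k \<in> carrier_mat n n) \<Longrightarrow> mat_adjoint (msum n f m) = msum n (\<lambda>k. mat_adjoint (f k)) m"
proof (induct m)
  case (Suc m)
  then have "msum n f m \<in> carrier_mat n n" "f m \<in> carrier_mat n n" by simp_all
  then have "mat_adjoint (msum n f (Suc m)) = mat_adjoint (msum n f m) + mat_adjoint (f m)"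
    by (simp only: msum.simps mat_adjoint_add)
  also have "mat_adjoint (msum n f m) = msum n (\<lambda>k. mat_adjoint (f k)) m"
    using Suc.prems by (intro Suc.hyps) simp
  finally show ?case by (simp only: msum.simps)
qed simp

section \<open>The Hilbert--Schmidt inner product\<close>

definition hs_inner :: "complex mat \<Rightarrow> complex mat \<Rightarrow> complex" where
  "hs_inner X Y = mat_trace (mat_adjoint X * Y)"

lemma hs_inner_entries:
  "X \<in> carrier_mat n n \<Longrightarrow> Y \<in> carrier_mat n n \<Longrightarrow>
   hs_inner X Y = (\<Sum>i<n. \<Sum>k<n. cnj (X $$ (k, i)) * Y $$ (k, i))"
  unfolding hs_inner_def mat_trace_def by (simp add: scalar_prod_def atLeast0LessThan)

lemma hs_inner_self:
  assumes "X \<in> carrier_mat n n"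
  shows "hs_inner X X = of_real (\<Sum>i<n. \<Sum>k<n. (cmod (X $$ (k, i)))\<^sup>2)"
proof -
  have "cnj z * z = of_real ((cmod z)\<^sup>2)" for z
    by (metis complex_norm_square mult.commute)
  with assms show ?thesis by (simp add: hs_inner_entries[of X n X] del: of_real_power)
qed

lemma hs_inner_self_nonneg: "X \<in> carrier_mat n n \<Longrightarrow> 0 \<le> Re (hs_inner X X)"
  by (simp add: hs_inner_self sum_nonneg)

lemma hs_inner_self_eq_0:
  assumes X: "X \<in> carrier_mat n n" and zero: "Re (hs_inner X X) = 0"
  shows "X = 0\<^sub>m n n"
proof (rule eq_matI)
  fix k i assume k: "k < dim_row (0\<^sub>m n n)" and i: "i < dim_col (0\<^sub>m n n)"
  have "(\<Sum>i<n. \<Sum>k<n. (cmod (X $$ (k, i)))\<^sup>2) = 0"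
    using zero X by (simp add: hs_inner_self)
  then have "(\<Sum>k<n. (cmod (X $$ (k, i)))\<^sup>2) = 0"
    using i by (simp add: sum_nonneg_eq_0_iff sum_nonneg)
  then have "(cmod (X $$ (k, i)))\<^sup>2 = 0"
    using k by (simp add: sum_nonneg_eq_0_iff)
  then show "X $$ (k, i) = 0\<^sub>m n n $$ (k, i)" using k i by simp
qed (use X in simp_all)

lemma hs_inner_add_left:
  "X \<in> carrier_mat n n \<Longrightarrow> Y \<in> carrier_mat n n \<Longrightarrow> Z \<in> carrier_mat n n \<Longrightarrow>
   hs_inner (X + Y) Z = hs_inner X Z + hs_inner Y Z"
  by (simp add: hs_inner_entries[of _ n] sum.distrib distrib_right)

lemma hs_inner_add_right:
  "X \<in> carrier_mat n n \<Longrightarrow> Y \<in> carrier_mat n n \<Longrightarrow> Z \<in> carrier_mat n n \<Longrightarrow>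
   hs_inner Z (X + Y) = hs_inner Z X + hs_inner Z Y"
  by (simp add: hs_inner_entries[of _ n] sum.distrib distrib_left)

lemma hs_inner_diff_left:
  "X \<in> carrier_mat n n \<Longrightarrow> Y \<in> carrier_mat n n \<Longrightarrow> Z \<in> carrier_mat n n \<Longrightarrow>
   hs_inner (X - Y) Z = hs_inner X Z - hs_inner Y Z"
  by (simp add: minus_carrier_mat hs_inner_entries[of "X - Y" n Z] hs_inner_entries[of X n Z] hs_inner_entries[of Y n Z]
      sum_subtractf left_diff_distrib)

lemma hs_inner_diff_right:
  "X \<in> carrier_mat n n \<Longrightarrow> Y \<in> carrier_mat n n \<Longrightarrow> Z \<in> carrier_mat n n \<Longrightarrow>
   hs_inner Z (X - Y) = hs_inner Z X - hs_inner Z Y"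
  by (simp add: minus_carrier_mat hs_inner_entries[of Z n "X - Y"] hs_inner_entries[of Z n X] hs_inner_entries[of Z n Y]
      sum_subtractf right_diff_distrib)

lemma hs_inner_smult_left:
  "X \<in> carrier_mat n n \<Longrightarrow> Z \<in> carrier_mat n n \<Longrightarrow> hs_inner (c \<cdot>\<^sub>m X) Z = cnj c * hs_inner X Z"
  by (simp add: hs_inner_entries[of _ n] sum_distrib_left mult.assoc)

lemma hs_inner_smult_right:
  "X \<in> carrier_mat n n \<Longrightarrow> Z \<in> carrier_mat n n \<Longrightarrow> hs_inner Z (c \<cdot>\<^sub>m X) = c * hs_inner Z X"
  by (simp add: hs_inner_entries[of _ n] sum_distrib_left mult.left_commute)

lemma hs_inner_commute:
  "X \<in> carrier_mat n n \<Longrightarrow> Z \<in> carrier_mat n n \<Longrightarrow> hs_inner Z X = cnj (hs_inner X Z)"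
  by (simp add: hs_inner_entries[of _ n] cnj_sum mult.commute)

lemma hs_norm_diff:
  assumes "X \<in> carrier_mat n n" "Y \<in> carrier_mat n n"
  shows "Re (hs_inner (X - Y) (X - Y)) = Re (hs_inner X X) + Re (hs_inner Y Y) - 2 * Re (hs_inner X Y)"
proof -
  have "hs_inner (X - Y) (X - Y) = hs_inner X X - hs_inner X Y - (hs_inner Y X - hs_inner Y Y)"
    using assms by (simp add: minus_carrier_mat hs_inner_diff_left[of _ n] hs_inner_diff_right[of _ n])
  with hs_inner_commute[OF assms] show ?thesis by simp
qed

lemma hs_convex_comb_unimodular_eq:
  fixes p q :: real
  assumes X: "X \<in> carrier_mat n n" and Y: "Y \<in> carrier_mat n n" and R: "R \<in> carrier_mat n n"
    and norm_X: "Re (hs_inner X X) = Re (hs_inner R R)"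
    and norm_Y: "Re (hs_inner Y Y) \<le> Re (hs_inner R R)"
    and comb: "c \<cdot>\<^sub>m R = complex_of_real q \<cdot>\<^sub>m X + complex_of_real p \<cdot>\<^sub>m Y"
    and c: "cmod c = 1" and pq: "0 < p" "0 < q" "p + q = 1"
  shows "X = Y"
proof -
  define a b d where "a = Re (hs_inner R R)" and "b = Re (hs_inner Y Y)"
    and "d = Re (hs_inner (X - Y) (X - Y))"
  have XY: "X - Y \<in> carrier_mat n n" using X Y by (simp add: minus_carrier_mat)
  have "hs_inner (c \<cdot>\<^sub>m R) (c \<cdot>\<^sub>m R) = cnj c * c * hs_inner R R"
    using R by (simp add: hs_inner_smult_left hs_inner_smult_right)
  also have "cnj c * c = 1"
    using c by (metis complex_norm_square mult.commute of_real_1 power_one)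
  finally have "Re (hs_inner (c \<cdot>\<^sub>m R) (c \<cdot>\<^sub>m R)) = a" by (simp add: a_def)
  moreover have "hs_inner (c \<cdot>\<^sub>m R) (c \<cdot>\<^sub>m R)
      = of_real (q * q) * hs_inner X X + of_real (p * p) * hs_inner Y Y
        + of_real (q * p) * (hs_inner X Y + hs_inner Y X)"
    unfolding comb using X Y
    by (simp add: hs_inner_add_left[of _ n] hs_inner_add_right[of _ n] hs_inner_smult_left
        hs_inner_smult_right algebra_simps)
  ultimately have "a = q * q * a + p * p * b + q * p * (2 * Re (hs_inner X Y))"
    using norm_X hs_inner_commute[OF X Y] by (simp add: a_def b_def)
  moreover have "d = a + b - 2 * Re (hs_inner X Y)"
    using hs_norm_diff[OF X Y] norm_X by (simp add: a_def b_def d_def)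
  ultimately have a_eq: "a = q * q * a + p * p * b + q * p * (a + b - d)" by simp
  have q: "q = 1 - p" using pq(3) by simp
  have "p * (a - b + q * d) = a - (q * q * a + p * p * b + q * p * (a + b - d))"
    unfolding q by (simp add: algebra_simps)
  then have "a - b + q * d = 0" using a_eq pq(1) by simp
  moreover have "b \<le> a" using norm_Y by (simp add: a_def b_def)
  moreover have "0 \<le> q * d"
    using pq(2) hs_inner_self_nonneg[OF XY] unfolding d_def by simp
  ultimately have "q * d = 0" by linarith
  then have "d = 0" using pq(2) by simp
  then have "X - Y = 0\<^sub>m n n" using hs_inner_self_eq_0[OF XY] unfolding d_def by simp
  then show ?thesis using minus_mat_eq_0_iff[OF X Y] by simp
qed

section \<open>Linear maps on matrices and their representing matrices\<close>

definition mat_linear :: "nat \<Rightarrow> (complex mat \<Rightarrow> complex mat) \<Rightarrow> bool" where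
  "mat_linear n T \<longleftrightarrow>
     (\<forall>X \<in> carrier_mat n n. T X \<in> carrier_mat n n) \<and>
     (\<forall>X \<in> carrier_mat n n. \<forall>Y \<in> carrier_mat n n. T (X + Y) = T X + T Y) \<and>
     (\<forall>X \<in> carrier_mat n n. \<forall>c. T (c \<cdot>\<^sub>m X) = c \<cdot>\<^sub>m T X)"

lemma mat_linearD:
  assumes "mat_linear n T"
  shows "X \<in> carrier_mat n n \<Longrightarrow> T X \<in> carrier_mat n n"
    and "X \<in> carrier_mat n n \<Longrightarrow> Y \<in> carrier_mat n n \<Longrightarrow> T (X + Y) = T X + T Y"
    and "X \<in> carrier_mat n n \<Longrightarrow> T (c \<cdot>\<^sub>m X) = c \<cdot>\<^sub>m T X"
  using assms unfolding mat_linear_def by blast+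

lemma mat_linear_zero:
  assumes T: "mat_linear n T"
  shows "T (0\<^sub>m n n) = 0\<^sub>m n n"
proof -
  have "T (0\<^sub>m n n) = T ((0 :: complex) \<cdot>\<^sub>m 0\<^sub>m n n)" by simp
  also have "\<dots> = 0 \<cdot>\<^sub>m T (0\<^sub>m n n)" by (rule mat_linearD(3)[OF T]) simp
  also have "\<dots> = 0\<^sub>m n n"
    using mat_linearD(1)[OF T, of "0\<^sub>m n n"] by (intro eq_matI) auto
  finally show ?thesis .
qed

lemma mat_linear_msum:
  assumes T: "mat_linear n T" and f: "\<And>k. k < m \<Longrightarrow> f k \<in> carrier_mat n n"
  shows "T (msum n f m) = msum n (\<lambda>k. T (f k)) m"
  using f
proof (induct m)
  case 0
  then show ?case using mat_linear_zero[OF T] by simp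
next
  case (Suc m)
  then have "msum n f m \<in> carrier_mat n n" "f m \<in> carrier_mat n n" by simp_all
  then have "T (msum n f (Suc m)) = T (msum n f m) + T (f m)"
    by (simp add: mat_linearD(2)[OF T])
  also have "T (msum n f m) = msum n (\<lambda>k. T (f k)) m"
    using Suc.prems by (intro Suc.hyps) simp
  finally show ?case by (simp only: msum.simps)
qed

lemma mat_linear_lincomb:
  assumes T: "mat_linear n T" and S: "mat_linear n S"
  shows "mat_linear n (\<lambda>X. a \<cdot>\<^sub>m T X + b \<cdot>\<^sub>m S X)"
  unfolding mat_linear_def
proof (intro conjI ballI allI)
  fix X :: "complex mat" assume X: "X \<in> carrier_mat n n"
  note TX = mat_linearD(1)[OF T X] and SX = mat_linearD(1)[OF S X]
  show "a \<cdot>\<^sub>m T X + b \<cdot>\<^sub>m S X \<in> carrier_mat n n" using TX SX by simp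
  fix c
  show "a \<cdot>\<^sub>m T (c \<cdot>\<^sub>m X) + b \<cdot>\<^sub>m S (c \<cdot>\<^sub>m X) = c \<cdot>\<^sub>m (a \<cdot>\<^sub>m T X + b \<cdot>\<^sub>m S X)"
    unfolding mat_linearD(3)[OF T X] mat_linearD(3)[OF S X]
    using TX SX by (intro eq_matI) (simp_all add: algebra_simps)
next
  fix X Y :: "complex mat" assume X: "X \<in> carrier_mat n n" and Y: "Y \<in> carrier_mat n n"
  show "a \<cdot>\<^sub>m T (X + Y) + b \<cdot>\<^sub>m S (X + Y) = a \<cdot>\<^sub>m T X + b \<cdot>\<^sub>m S X + (a \<cdot>\<^sub>m T Y + b \<cdot>\<^sub>m S Y)"
    unfolding mat_linearD(2)[OF T X Y] mat_linearD(2)[OF S X Y]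
    using mat_linearD(1)[OF T X] mat_linearD(1)[OF S X] mat_linearD(1)[OF T Y] mat_linearD(1)[OF S Y]
    by (intro eq_matI) (simp_all add: algebra_simps)
qed

text \<open>Row-major vectorisation, matching the index encoding \<open>(i, j) \<mapsto> i * n + j\<close> of \<open>so_matrix\<close>.\<close>

definition vec_of_mat :: "nat \<Rightarrow> complex mat \<Rightarrow> complex vec" where
  "vec_of_mat n X = vec (n * n) (\<lambda>r. X $$ (r div n, r mod n))"

definition mat_of_vec :: "nat \<Rightarrow> complex vec \<Rightarrow> complex mat" where
  "mat_of_vec n v = mat n n (\<lambda>(i, j). v $ (i * n + j))"

lemma vec_of_mat_carrier [simp]: "vec_of_mat n X \<in> carrier_vec (n * n)"
  by (simp add: vec_of_mat_def)

lemma dim_vec_of_mat [simp]: "dim_vec (vec_of_mat n X) = n * n"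
  by (simp add: vec_of_mat_def)

lemma mat_of_vec_carrier [simp]: "mat_of_vec n v \<in> carrier_mat n n"
  by (simp add: mat_of_vec_def)

lemma div_mod_less_square:
  assumes "r < n * n"
  shows "r div n < n" "r mod n < (n :: nat)"
proof -
  from assms have "0 < n" by (cases n) auto
  then show "r div n < n" "r mod n < n" using assms by (simp_all add: div_less_iff_less_mult)
qed

lemma row_major_index:
  assumes "i < n" "j < (n :: nat)"
  shows "(i * n + j) div n = i" "(i * n + j) mod n = j" "i * n + j < n * n"
proof -
  show "(i * n + j) div n = i" "(i * n + j) mod n = j" using assms(2) by simp_all
  have "i * n + j < (i + 1) * n" using assms(2) by simp
  also have "\<dots> \<le> n * n" using assms(1) by (simp add: mult_le_mono1 del: mult_Suc)
  finally show "i * n + j < n * n" .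
qed

lemma index_vec_of_mat [simp]: "r < n * n \<Longrightarrow> vec_of_mat n X $ r = X $$ (r div n, r mod n)"
  by (simp add: vec_of_mat_def)

lemma vec_of_mat_of_vec:
  assumes "v \<in> carrier_vec (n * n)"
  shows "vec_of_mat n (mat_of_vec n v) = v"
proof (rule eq_vecI)
  fix r assume "r < dim_vec v"
  then have r: "r < n * n" using assms by simp
  then show "vec_of_mat n (mat_of_vec n v) $ r = v $ r"
    using div_mod_less_square[OF r] by (simp add: mat_of_vec_def)
qed (use assms in simp)

lemma vec_of_mat_inj:
  assumes X: "X \<in> carrier_mat n n" and Y: "Y \<in> carrier_mat n n"
    and eq: "vec_of_mat n X = vec_of_mat n Y"
  shows "X = Y"
proof (rule eq_matI)
  fix i j assume "i < dim_row Y" "j < dim_col Y"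
  then have "i < n" "j < n" using Y by auto
  note idx = row_major_index[OF this]
  have "vec_of_mat n X $ (i * n + j) = vec_of_mat n Y $ (i * n + j)" using eq by simp
  then show "X $$ (i, j) = Y $$ (i, j)" using idx by simp
qed (use X Y in auto)

lemma vec_of_mat_minus:
  "X \<in> carrier_mat n n \<Longrightarrow> Y \<in> carrier_mat n n \<Longrightarrow> vec_of_mat n (X - Y) = vec_of_mat n X - vec_of_mat n Y"
  by (rule eq_vecI) (simp_all add: div_mod_less_square)

lemma vec_of_mat_smult:
  "X \<in> carrier_mat n n \<Longrightarrow> vec_of_mat n (c \<cdot>\<^sub>m X) = c \<cdot>\<^sub>v vec_of_mat n X"
  by (rule eq_vecI) (simp_all add: div_mod_less_square)

lemma vec_of_mat_zero [simp]: "vec_of_mat n (0\<^sub>m n n) = 0\<^sub>v (n * n)"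
  by (rule eq_vecI) (simp_all add: div_mod_less_square)

lemma vec_of_mat_eq_0_iff:
  "X \<in> carrier_mat n n \<Longrightarrow> vec_of_mat n X = 0\<^sub>v (n * n) \<longleftrightarrow> X = 0\<^sub>m n n"
  using vec_of_mat_inj[of X n "0\<^sub>m n n"] by auto

lemma mat_unit_carrier [simp]: "mat_unit n k l \<in> carrier_mat n n"
  by (simp add: mat_unit_def)

lemma dim_so_matrix [simp]: "dim_row (so_matrix n T) = n * n" "dim_col (so_matrix n T) = n * n"
  by (simp_all add: so_matrix_def)

lemma so_matrix_carrier [simp]: "so_matrix n T \<in> carrier_mat (n * n) (n * n)"
  by (simp add: carrier_matI)

lemma mat_unit_expansion:
  assumes X: "X \<in> carrier_mat n n"
  shows "X = msum n (\<lambda>c. X $$ (c div n, c mod n) \<cdot>\<^sub>m mat_unit n (c div n) (c mod n)) (n * n)"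
    (is "X = msum n ?f (n * n)")
proof (rule eq_matI)
  have f: "\<And>c. c < n * n \<Longrightarrow> ?f c \<in> carrier_mat n n" by simp
  show "dim_row X = dim_row (msum n ?f (n * n))" "dim_col X = dim_col (msum n ?f (n * n))"
    using X dim_msum[OF f] by simp_all
  fix i j assume "i < dim_row (msum n ?f (n * n))" "j < dim_col (msum n ?f (n * n))"
  then have ij: "i < n" "j < n" using dim_msum[OF f] by simp_all
  note idx = row_major_index[OF ij]
  have "?f c $$ (i, j) = (if c = i * n + j then X $$ (i, j) else 0)" if "c < n * n" for c
  proof -
    have "(i = c div n \<and> j = c mod n) \<longleftrightarrow> c = i * n + j"
      using idx by auto
    then show ?thesis using ij div_mod_less_square[OF that] by (auto simp: mat_unit_def)
  qed
  then have "msum n ?f (n * n) $$ (i, j) = (\<Sum>c<n * n. if c = i * n + j then X $$ (i, j) else 0)"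
    by (simp add: index_msum[OF f ij])
  also have "\<dots> = X $$ (i, j)" using idx by simp
  finally show "X $$ (i, j) = msum n ?f (n * n) $$ (i, j)" by simp
qed

lemma vec_of_mat_so_matrix:
  assumes T: "mat_linear n T" and X: "X \<in> carrier_mat n n"
  shows "vec_of_mat n (T X) = so_matrix n T *\<^sub>v vec_of_mat n X"
proof (rule eq_vecI)
  let ?E = "\<lambda>c. mat_unit n (c div n) (c mod n)"
  have TE: "\<And>c. T (?E c) \<in> carrier_mat n n" using mat_linearD(1)[OF T] by simp
  have g: "\<And>c. c < n * n \<Longrightarrow> X $$ (c div n, c mod n) \<cdot>\<^sub>m T (?E c) \<in> carrier_mat n n"
    using TE by simp
  have "T X = T (msum n (\<lambda>c. X $$ (c div n, c mod n) \<cdot>\<^sub>m ?E c) (n * n))"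
    using mat_unit_expansion[OF X] by simp
  also have "\<dots> = msum n (\<lambda>c. X $$ (c div n, c mod n) \<cdot>\<^sub>m T (?E c)) (n * n)"
    by (simp add: mat_linear_msum[OF T] mat_linearD(3)[OF T])
  finally have TX: "T X = msum n (\<lambda>c. X $$ (c div n, c mod n) \<cdot>\<^sub>m T (?E c)) (n * n)" .
  fix r assume "r < dim_vec (so_matrix n T *\<^sub>v vec_of_mat n X)"
  then have r: "r < n * n" by simp
  note rb = div_mod_less_square[OF r]
  have "vec_of_mat n (T X) $ r
      = (\<Sum>c<n * n. (X $$ (c div n, c mod n) \<cdot>\<^sub>m T (?E c)) $$ (r div n, r mod n))"
    using r unfolding TX by (simp add: index_msum[OF g rb])
  also have "\<dots> = (\<Sum>c<n * n. so_matrix n T $$ (r, c) * vec_of_mat n X $ c)"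
    using carrier_matD[OF TE] rb r by (intro sum.cong) (auto simp: so_matrix_def div_mod_less_square mult.commute)
  also have "\<dots> = (so_matrix n T *\<^sub>v vec_of_mat n X) $ r"
    using r by (simp add: scalar_prod_def atLeast0LessThan)
  finally show "vec_of_mat n (T X) $ r = (so_matrix n T *\<^sub>v vec_of_mat n X) $ r" .
qed simp

section \<open>Algebraic multiplicity via Jordan normal forms\<close>

lemma char_matrix_mult_vec:
  assumes A: "(A :: 'a :: field mat) \<in> carrier_mat n n" and v: "v \<in> carrier_vec n"
  shows "char_matrix A e *\<^sub>v v = A *\<^sub>v v - e \<cdot>\<^sub>v v"
proof (rule eq_vecI)
  fix i assume "i < dim_vec (A *\<^sub>v v - e \<cdot>\<^sub>v v)"
  then have i: "i < n" using A v by simp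
  have "(char_matrix A e *\<^sub>v v) $ i = (\<Sum>j<n. (A $$ (i, j) - e * (if j = i then 1 else 0)) * v $ j)"
    using A v i unfolding char_matrix_def by (simp add: scalar_prod_def atLeast0LessThan)
  also have "\<dots> = (\<Sum>j<n. A $$ (i, j) * v $ j - (if j = i then e * v $ j else 0))"
    by (rule sum.cong) (simp_all add: left_diff_distrib)
  also have "\<dots> = (\<Sum>j<n. A $$ (i, j) * v $ j) - e * v $ i"
    using i by (simp add: sum_subtractf)
  also have "\<dots> = (A *\<^sub>v v - e \<cdot>\<^sub>v v) $ i"
    using A v i by (simp add: scalar_prod_def atLeast0LessThan)
  finally show "(char_matrix A e *\<^sub>v v) $ i = (A *\<^sub>v v - e \<cdot>\<^sub>v v) $ i" .
qed (use A v in \<open>simp add: char_matrix_def\<close>)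

lemma char_matrix_pow_mult_vec:
  assumes A: "(A :: 'a :: field mat) \<in> carrier_mat n n" and v: "v \<in> carrier_vec n"
  shows "(char_matrix A e ^\<^sub>m k) *\<^sub>v v = ((\<lambda>w. A *\<^sub>v w - e \<cdot>\<^sub>v w) ^^ k) v"
  using v
proof (induct k arbitrary: v)
  case 0
  then show ?case using A by (simp add: char_matrix_def)
next
  case (Suc k)
  have C: "char_matrix A e \<in> carrier_mat n n" using A by simp
  have "(char_matrix A e ^\<^sub>m Suc k) *\<^sub>v v = (char_matrix A e ^\<^sub>m k) *\<^sub>v (char_matrix A e *\<^sub>v v)"
    using C Suc.prems by (simp add: assoc_mult_mat_vec[of _ n n _ n])
  also have "\<dots> = ((\<lambda>w. A *\<^sub>v w - e \<cdot>\<^sub>v w) ^^ k) (A *\<^sub>v v - e \<cdot>\<^sub>v v)"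
    using A Suc.prems by (simp add: Suc.hyps char_matrix_mult_vec)
  finally show ?case by (simp only: funpow_Suc_right o_apply)
qed

context kernel
begin

lemma lincomb_singleton:
  assumes w: "w \<in> mat_kernel A"
  shows "lincomb a {w} = a w \<cdot>\<^sub>v w"
proof -
  have "lincomb a {w} = a w \<cdot>\<^sub>v w + finsum VK (\<lambda>v. a v \<cdot>\<^sub>v v) {}"
    unfolding Ker.lincomb_def by (rule Ker.finsum_insert) (use w mat_kernel_smult[OF A w] in auto)
  then show ?thesis using mat_kernelD(1)[OF A w] by simp
qed

lemma span_singleton:
  assumes w: "w \<in> mat_kernel A"
  shows "span {w} = {c \<cdot>\<^sub>v w | c. True}"
proof
  show "span {w} \<subseteq> {c \<cdot>\<^sub>v w | c. True}"
  proof
    fix v assume "v \<in> span {w}"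
    then obtain a where "lincomb a {w} = v" using Ker.finite_in_span[of "{w}" v] w by auto
    then show "v \<in> {c \<cdot>\<^sub>v w | c. True}" by (auto simp: lincomb_singleton[OF w])
  qed
  show "{c \<cdot>\<^sub>v w | c. True} \<subseteq> span {w}"
  proof clarify
    fix c
    have "lincomb (\<lambda>_. c) {w} \<in> span {w}" unfolding Ker.span_def by force
    then show "c \<cdot>\<^sub>v w \<in> span {w}" by (simp add: lincomb_singleton[OF w])
  qed
qed

lemma lin_indpt_singleton:
  assumes w: "w \<in> mat_kernel A" and w_nz: "w \<noteq> 0\<^sub>v nc"
  shows "lin_indpt {w}"
proof (rule Ker.finite_lin_indpt2)
  fix a assume "lincomb a {w} = 0\<^sub>v nc"
  then have aw: "a w \<cdot>\<^sub>v w = 0\<^sub>v nc" by (simp add: lincomb_singleton[OF w])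
  have "a w = 0"
  proof (rule ccontr)
    assume "a w \<noteq> 0"
    then have "w = inverse (a w) \<cdot>\<^sub>v (a w \<cdot>\<^sub>v w)"
      using mat_kernelD(1)[OF A w] by (simp add: smult_smult_assoc)
    with aw w_nz show False by simp
  qed
  then show "\<forall>v \<in> {w}. a v = 0" by simp
qed (use w in simp_all)

end

lemma kernel_dim_le_1_iff:
  assumes K: "(K :: 'a :: field mat) \<in> carrier_mat n n"
    and w: "w \<in> mat_kernel K" and w_nz: "w \<noteq> 0\<^sub>v n"
  shows "kernel_dim K \<le> 1 \<longleftrightarrow> (\<forall>v \<in> mat_kernel K. \<exists>c. v = c \<cdot>\<^sub>v w)"
proof -
  interpret kernel n n K by (unfold_locales) (rule K)
  show ?thesis
  proof
    assume dim: "kernel_dim K \<le> 1"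
    have fin_dim: "Ker.fin_dim"
      using kernel_basis_exists[OF K] unfolding Ker.fin_dim_def Ker.basis_def by blast
    show "\<forall>v \<in> mat_kernel K. \<exists>c. v = c \<cdot>\<^sub>v w"
    proof (rule ballI, rule ccontr)
      fix v assume v: "v \<in> mat_kernel K" and not_multiple: "\<nexists>c. v = c \<cdot>\<^sub>v w"
      then have "v \<notin> span {w}" using span_singleton[OF w] by auto
      moreover have "v \<noteq> w" using not_multiple by (metis scalar_vec_one)
      ultimately have "lin_indpt ({w} \<union> {v})"
        using Ker.lin_dep_iff_in_span[of "{w}" v] lin_indpt_singleton[OF w w_nz] w v by auto
      then have "card ({w} \<union> {v}) \<le> Ker.dim"
        using Ker.li_le_dim(2)[OF fin_dim] w v by auto
      with \<open>v \<noteq> w\<close> dim show False by simp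
    qed
  next
    assume "\<forall>v \<in> mat_kernel K. \<exists>c. v = c \<cdot>\<^sub>v w"
    then have "span {w} = mat_kernel K"
      using span_singleton[OF w] Ker.span_is_subset2[of "{w}"] w by auto
    then have "Ker.dim \<le> card {w}" using w by (intro Ker.gen_ge_dim) auto
    then show "kernel_dim K \<le> 1" by simp
  qed
qed

text \<open>The list \<open>bs\<close> holds the sizes of the Jordan blocks of \<open>A\<close> for the eigenvalue \<open>e\<close>.\<close>

lemma jordan_block_sizes:
  assumes "(A :: complex mat) \<in> carrier_mat n n"
  obtains bs where "order e (char_poly A) = sum_list bs"
    and "\<And>k. dim_gen_eigenspace A e k = sum_list (map (min k) bs)"
proof -
  from char_poly_factorized[OF assms] obtain as where "char_poly A = (\<Prod>a\<leftarrow>as. [:- a, 1:])"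
    by blast
  from jordan_nf_exists[OF assms this] obtain n_as where J: "jordan_nf A n_as" by blast
  define bs where "bs = map fst (filter (\<lambda>na. snd na = e) n_as)"
  have "order e (char_poly A) = sum_list bs" unfolding jordan_nf_order[OF J] bs_def ..
  moreover have "dim_gen_eigenspace A e k = sum_list (map (min k) bs)" for k
    unfolding dim_gen_eigenspace[OF J] bs_def by (induct n_as) auto
  ultimately show ?thesis using that by blast
qed

lemma dim_gen_eigenspace_le_order:
  assumes "(A :: complex mat) \<in> carrier_mat n n"
  shows "dim_gen_eigenspace A e k \<le> order e (char_poly A)"
proof -
  obtain bs where "order e (char_poly A) = sum_list bs"
    and "dim_gen_eigenspace A e k = sum_list (map (min k) bs)"
    using jordan_block_sizes[OF assms] by metis
  moreover have "sum_list (map (min k) bs) \<le> sum_list bs" by (induct bs) auto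
  ultimately show ?thesis by simp
qed

lemma order_le_1_if_dim_gen_eigenspace_le_1:
  assumes "(A :: complex mat) \<in> carrier_mat n n" and "2 \<le> k" and "dim_gen_eigenspace A e k \<le> 1"
  shows "order e (char_poly A) \<le> 1"
proof -
  obtain bs where "order e (char_poly A) = sum_list bs"
    and "dim_gen_eigenspace A e k = sum_list (map (min k) bs)"
    using jordan_block_sizes[OF assms(1)] by metis
  moreover have "sum_list (map (min k) bs) \<le> 1 \<Longrightarrow> sum_list bs = sum_list (map (min k) bs)"
    \<comment> \<open>a block of size at least two would already contribute two dimensions\<close>
    using assms(2) by (induct bs) (auto simp: min_def split: if_splits)
  ultimately show ?thesis using assms(3) by simp
qed

section \<open>Eigenvalues of linear maps on matrices\<close>

lemma mat_linear_iterate_carrier: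
  assumes T: "mat_linear n T" and X: "X \<in> carrier_mat n n"
  shows "((\<lambda>Y. T Y - e \<cdot>\<^sub>m Y) ^^ k) X \<in> carrier_mat n n"
  by (induct k) (simp_all add: X mat_linearD(1)[OF T] minus_carrier_mat)

lemma vec_of_mat_iterate:
  assumes T: "mat_linear n T" and X: "X \<in> carrier_mat n n"
  shows "vec_of_mat n (((\<lambda>Y. T Y - e \<cdot>\<^sub>m Y) ^^ k) X)
    = (char_matrix (so_matrix n T) e ^\<^sub>m k) *\<^sub>v vec_of_mat n X"
proof -
  have step: "vec_of_mat n (T Y - e \<cdot>\<^sub>m Y) = so_matrix n T *\<^sub>v vec_of_mat n Y - e \<cdot>\<^sub>v vec_of_mat n Y"
    if "Y \<in> carrier_mat n n" for Y
    using that mat_linearD(1)[OF T that]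
    by (simp add: vec_of_mat_minus vec_of_mat_smult vec_of_mat_so_matrix[OF T])
  have "vec_of_mat n (((\<lambda>Y. T Y - e \<cdot>\<^sub>m Y) ^^ k) X)
      = ((\<lambda>w. so_matrix n T *\<^sub>v w - e \<cdot>\<^sub>v w) ^^ k) (vec_of_mat n X)"
    using X
  proof (induct k arbitrary: X)
    case (Suc k)
    have "T X - e \<cdot>\<^sub>m X \<in> carrier_mat n n"
      using Suc.prems mat_linearD(1)[OF T] by (simp add: minus_carrier_mat)
    then show ?case using Suc by (simp only: funpow_Suc_right o_apply step)
  qed simp
  also have "\<dots> = (char_matrix (so_matrix n T) e ^\<^sub>m k) *\<^sub>v vec_of_mat n X"
    by (rule char_matrix_pow_mult_vec[of _ "n * n", symmetric]) simp_all
  finally show ?thesis .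
qed

lemma vec_of_mat_in_gen_eigenspace_iff:
  assumes T: "mat_linear n T" and X: "X \<in> carrier_mat n n"
  shows "vec_of_mat n X \<in> mat_kernel (char_matrix (so_matrix n T) e ^\<^sub>m k)
    \<longleftrightarrow> ((\<lambda>Y. T Y - e \<cdot>\<^sub>m Y) ^^ k) X = 0\<^sub>m n n"
proof -
  have K: "char_matrix (so_matrix n T) e ^\<^sub>m k \<in> carrier_mat (n * n) (n * n)" by simp
  show ?thesis
    by (simp add: mat_kernel[OF K] vec_of_mat_iterate[OF T X, symmetric]
        vec_of_mat_eq_0_iff[OF mat_linear_iterate_carrier[OF T X]])
qed

lemma eigenvector_so_matrix_iff:
  assumes T: "mat_linear n T" and X: "X \<in> carrier_mat n n"
  shows "eigenvector (so_matrix n T) (vec_of_mat n X) e \<longleftrightarrow> X \<noteq> 0\<^sub>m n n \<and> T X = e \<cdot>\<^sub>m X"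
proof -
  have TX: "T X \<in> carrier_mat n n" "e \<cdot>\<^sub>m X \<in> carrier_mat n n" using mat_linearD(1)[OF T X] X by simp_all
  have "so_matrix n T *\<^sub>v vec_of_mat n X = e \<cdot>\<^sub>v vec_of_mat n X
      \<longleftrightarrow> vec_of_mat n (T X) = vec_of_mat n (e \<cdot>\<^sub>m X)"
    by (simp add: vec_of_mat_so_matrix[OF T X] vec_of_mat_smult[OF X])
  also have "\<dots> \<longleftrightarrow> T X = e \<cdot>\<^sub>m X" using vec_of_mat_inj[OF TX] by auto
  finally show ?thesis
    unfolding eigenvector_def using vec_of_mat_eq_0_iff[OF X] by simp
qed

lemma alg_mult_le_square: "alg_mult n T e \<le> n * n"
proof -
  have M: "so_matrix n T \<in> carrier_mat (n * n) (n * n)" by simp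
  have "char_poly (so_matrix n T) \<noteq> 0" using degree_monic_char_poly[OF M] by auto
  then show ?thesis
    unfolding alg_mult_def using order_degree degree_monic_char_poly[OF M] by metis
qed

lemma fixed_iff_iterate_1:
  assumes T: "mat_linear n T" and X: "X \<in> carrier_mat n n"
  shows "((\<lambda>Y. T Y - e \<cdot>\<^sub>m Y) ^^ 1) X = 0\<^sub>m n n \<longleftrightarrow> T X = e \<cdot>\<^sub>m X"
  using minus_mat_eq_0_iff[OF mat_linearD(1)[OF T X], of "e \<cdot>\<^sub>m X"] X by simp

lemma eigenvectors_proportional_if_alg_mult_le_1:
  assumes T: "mat_linear n T" and mult: "alg_mult n T e \<le> 1"
    and X0: "X0 \<in> carrier_mat n n" "X0 \<noteq> 0\<^sub>m n n" "T X0 = e \<cdot>\<^sub>m X0"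
    and X: "X \<in> carrier_mat n n" "T X = e \<cdot>\<^sub>m X"
  shows "\<exists>c. X = c \<cdot>\<^sub>m X0"
proof -
  let ?K = "char_matrix (so_matrix n T) e ^\<^sub>m 1"
  have K: "?K \<in> carrier_mat (n * n) (n * n)" by simp
  have in_kernel: "vec_of_mat n Y \<in> mat_kernel ?K" if "Y \<in> carrier_mat n n" "T Y = e \<cdot>\<^sub>m Y" for Y
    using that
    by (simp only: vec_of_mat_in_gen_eigenspace_iff[OF T that(1)] fixed_iff_iterate_1[OF T that(1)])
  have "kernel_dim ?K \<le> 1"
    using dim_gen_eigenspace_le_order[of "so_matrix n T" "n * n" e 1] mult
    unfolding dim_gen_eigenspace_def alg_mult_def by simp
  then obtain c where "vec_of_mat n X = c \<cdot>\<^sub>v vec_of_mat n X0"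
    using kernel_dim_le_1_iff[OF K in_kernel[OF X0(1,3)]] in_kernel[OF X] X0(1,2)
    by (auto simp: vec_of_mat_eq_0_iff)
  then have "vec_of_mat n X = vec_of_mat n (c \<cdot>\<^sub>m X0)" using X0(1) by (simp add: vec_of_mat_smult)
  then have "X = c \<cdot>\<^sub>m X0" using vec_of_mat_inj[OF X(1), of "c \<cdot>\<^sub>m X0"] X0(1) by simp
  then show ?thesis ..
qed

lemma alg_mult_eq_1I:
  assumes T: "mat_linear n T"
    and X0: "X0 \<in> carrier_mat n n" "X0 \<noteq> 0\<^sub>m n n" "T X0 = e \<cdot>\<^sub>m X0"
    and gen: "\<And>X. X \<in> carrier_mat n n \<Longrightarrow> T (T X - e \<cdot>\<^sub>m X) - e \<cdot>\<^sub>m (T X - e \<cdot>\<^sub>m X) = 0\<^sub>m n n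
      \<Longrightarrow> \<exists>c. X = c \<cdot>\<^sub>m X0"
  shows "alg_mult n T e = 1"
proof -
  let ?M = "so_matrix n T" and ?K = "char_matrix (so_matrix n T) e ^\<^sub>m 2"
  have M: "?M \<in> carrier_mat (n * n) (n * n)" and K: "?K \<in> carrier_mat (n * n) (n * n)" by simp_all
  have iterate_2: "((\<lambda>Y. T Y - e \<cdot>\<^sub>m Y) ^^ 2) X = T (T X - e \<cdot>\<^sub>m X) - e \<cdot>\<^sub>m (T X - e \<cdot>\<^sub>m X)" for X
    by (simp add: numeral_2_eq_2)
  have fixed: "T X0 - e \<cdot>\<^sub>m X0 = 0\<^sub>m n n"
    using fixed_iff_iterate_1[OF T X0(1)] X0(3) by simp
  have w: "vec_of_mat n X0 \<in> mat_kernel ?K"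
    unfolding vec_of_mat_in_gen_eigenspace_iff[OF T X0(1)] iterate_2 fixed
    by (simp add: mat_linear_zero[OF T])
  have w_nz: "vec_of_mat n X0 \<noteq> 0\<^sub>v (n * n)" using X0(1,2) vec_of_mat_eq_0_iff by auto
  have "kernel_dim ?K \<le> 1"
  proof (subst kernel_dim_le_1_iff[OF K w w_nz], intro ballI)
    fix v assume v: "v \<in> mat_kernel ?K"
    then have v_carrier: "v \<in> carrier_vec (n * n)" using mat_kernelD(1)[OF K] by blast
    define X where "X = mat_of_vec n v"
    have X: "X \<in> carrier_mat n n" and vX: "vec_of_mat n X = v"
      unfolding X_def using vec_of_mat_of_vec[OF v_carrier] by simp_all
    then obtain c where "X = c \<cdot>\<^sub>m X0"
      using gen v vec_of_mat_in_gen_eigenspace_iff[OF T X, of e 2] iterate_2 by auto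
    then show "\<exists>c. v = c \<cdot>\<^sub>v vec_of_mat n X0" using vX X0(1) by (auto simp: vec_of_mat_smult)
  qed
  then have "order e (char_poly ?M) \<le> 1"
    using order_le_1_if_dim_gen_eigenspace_le_1[OF M, of 2] unfolding dim_gen_eigenspace_def by simp
  moreover have "eigenvalue ?M e"
    using eigenvector_so_matrix_iff[OF T X0(1)] X0 unfolding eigenvalue_def by blast
  then have "order e (char_poly ?M) \<noteq> 0"
    using eigenvalue_root_char_poly[OF M] degree_monic_char_poly[OF M] by (auto simp: order_root)
  ultimately show ?thesis unfolding alg_mult_def by simp
qed

section \<open>Unitary conjugations, unital channels and their mixtures\<close>

definition conj_by :: "complex mat \<Rightarrow> complex mat \<Rightarrow> complex mat" where
  "conj_by U \<rho> = U * \<rho> * mat_adjoint U"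

context
  fixes n :: nat and U :: "complex mat"
  assumes unitary: "unitary_op n U"
begin

lemma unitary_carrier: "U \<in> carrier_mat n n"
  and unitary_adjoint_mult: "mat_adjoint U * U = 1\<^sub>m n"
  and unitary_mult_adjoint: "U * mat_adjoint U = 1\<^sub>m n"
  using unitary unfolding unitary_op_def by simp_all

lemma conj_by_carrier: "\<rho> \<in> carrier_mat n n \<Longrightarrow> conj_by U \<rho> \<in> carrier_mat n n"
  using unitary_carrier by (simp add: conj_by_def)

lemma mat_linear_conj_by: "mat_linear n (conj_by U)"
  unfolding mat_linear_def
proof (intro conjI ballI allI)
  fix X Y :: "complex mat" assume X: "X \<in> carrier_mat n n" and Y: "Y \<in> carrier_mat n n"
  show "conj_by U (X + Y) = conj_by U X + conj_by U Y"
    using unitary_carrier X Y unfolding conj_by_def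
    by (simp add: mult_add_distrib_mat[of U n n] add_mult_distrib_mat[of _ n n _ "mat_adjoint U" n])
next
  fix X :: "complex mat" and c assume X: "X \<in> carrier_mat n n"
  show "conj_by U X \<in> carrier_mat n n" using X by (rule conj_by_carrier)
  show "conj_by U (c \<cdot>\<^sub>m X) = c \<cdot>\<^sub>m conj_by U X"
    using unitary_carrier X unfolding conj_by_def
    by (simp add: mult_smult_distrib[of U n n] mult_smult_assoc_mat[of _ n n "mat_adjoint U" n])
qed

lemma mat_trace_conj_by:
  assumes \<rho>: "\<rho> \<in> carrier_mat n n"
  shows "mat_trace (conj_by U \<rho>) = mat_trace \<rho>"
proof -
  have "mat_trace (conj_by U \<rho>) = mat_trace (\<rho> * mat_adjoint U * U)"
    unfolding conj_by_def
    using mat_trace_mult_cycle[OF unitary_carrier \<rho> mat_adjoint_carrier[OF unitary_carrier]] .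
  also have "\<dots> = mat_trace \<rho>"
    using unitary_carrier \<rho>
    by (simp add: assoc_mult_mat[of \<rho> n n "mat_adjoint U" n U n] unitary_adjoint_mult)
  finally show ?thesis .
qed

lemma conj_by_one: "conj_by U (1\<^sub>m n) = 1\<^sub>m n"
  using unitary_carrier unitary_mult_adjoint by (simp add: conj_by_def)

lemma hs_inner_conj_by:
  assumes \<rho>: "\<rho> \<in> carrier_mat n n"
  shows "hs_inner (conj_by U \<rho>) (conj_by U \<rho>) = hs_inner \<rho> \<rho>"
proof -
  note U = unitary_carrier
  have "mat_adjoint (conj_by U \<rho>) * conj_by U \<rho>
      = U * mat_adjoint \<rho> * (mat_adjoint U * U) * \<rho> * mat_adjoint U"
    unfolding conj_by_def mat_adjoint_conj[OF U \<rho>]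
    using U \<rho> by (simp add: assoc_mult_mat[of _ n n _ n _ n])
  also have "\<dots> = U * (mat_adjoint \<rho> * \<rho>) * mat_adjoint U"
    using U \<rho> by (simp add: unitary_adjoint_mult assoc_mult_mat[of _ n n _ n _ n])
  finally have "hs_inner (conj_by U \<rho>) (conj_by U \<rho>) = mat_trace (U * (mat_adjoint \<rho> * \<rho>) * mat_adjoint U)"
    unfolding hs_inner_def by simp
  also have "\<dots> = mat_trace (mat_adjoint \<rho> * \<rho> * mat_adjoint U * U)"
    using U \<rho> by (intro mat_trace_mult_cycle[of _ n]) simp_all
  also have "\<dots> = hs_inner \<rho> \<rho>"
    unfolding hs_inner_def using U \<rho> by (simp add: unitary_adjoint_mult assoc_mult_mat[of _ n n _ n _ n])
  finally show ?thesis .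
qed

end

locale unital_channel =
  fixes n m :: nat and A :: "nat \<Rightarrow> complex mat"
  assumes kraus_operator_carrier [simp]: "\<And>j. j < m \<Longrightarrow> A j \<in> carrier_mat n n"
    and trace_preserving: "msum n (\<lambda>j. mat_adjoint (A j) * A j) m = 1\<^sub>m n"
    and unital: "msum n (\<lambda>j. A j * mat_adjoint (A j)) m = 1\<^sub>m n"
begin

definition kraus :: "complex mat \<Rightarrow> complex mat" where
  "kraus \<rho> = msum n (\<lambda>j. A j * \<rho> * mat_adjoint (A j)) m"

lemma kraus_carrier: "\<rho> \<in> carrier_mat n n \<Longrightarrow> kraus \<rho> \<in> carrier_mat n n"
  unfolding kraus_def by (rule msum_carrier) simp

lemma mat_linear_kraus: "mat_linear n kraus"
  unfolding mat_linear_def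
proof (intro conjI ballI allI)
  fix X Y :: "complex mat" assume X: "X \<in> carrier_mat n n" and Y: "Y \<in> carrier_mat n n"
  have "kraus (X + Y) = msum n (\<lambda>j. A j * X * mat_adjoint (A j) + A j * Y * mat_adjoint (A j)) m"
    unfolding kraus_def using X Y
    by (intro msum_cong) (simp add: mult_add_distrib_mat[of _ n n] add_mult_distrib_mat[of _ n n _ _ n])
  also have "\<dots> = kraus X + kraus Y"
    unfolding kraus_def using X Y by (intro msum_add) simp_all
  finally show "kraus (X + Y) = kraus X + kraus Y" .
next
  fix X :: "complex mat" and c assume X: "X \<in> carrier_mat n n"
  show "kraus X \<in> carrier_mat n n" using X by (rule kraus_carrier)
  have "kraus (c \<cdot>\<^sub>m X) = msum n (\<lambda>j. c \<cdot>\<^sub>m (A j * X * mat_adjoint (A j))) m"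
    unfolding kraus_def using X
    by (intro msum_cong) (simp add: mult_smult_distrib[of _ n n] mult_smult_assoc_mat[of _ n n _ n])
  also have "\<dots> = c \<cdot>\<^sub>m kraus X"
    unfolding kraus_def using X by (intro msum_smult) simp
  finally show "kraus (c \<cdot>\<^sub>m X) = c \<cdot>\<^sub>m kraus X" .
qed

lemma mat_trace_kraus:
  assumes \<rho>: "\<rho> \<in> carrier_mat n n"
  shows "mat_trace (kraus \<rho>) = mat_trace \<rho>"
proof -
  have "mat_trace (kraus \<rho>) = (\<Sum>j<m. mat_trace (A j * \<rho> * mat_adjoint (A j)))"
    unfolding kraus_def using \<rho> by (simp add: mat_trace_msum)
  also have "\<dots> = (\<Sum>j<m. mat_trace (\<rho> * (mat_adjoint (A j) * A j) * 1\<^sub>m n))"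
    using \<rho> by (intro sum.cong refl)
      (simp add: mat_trace_mult_cycle[of "A _" n] assoc_mult_mat[of \<rho> n n _ n _ n] right_mult_one_mat[of _ n n])
  also have "\<dots> = mat_trace (\<rho> * msum n (\<lambda>j. mat_adjoint (A j) * A j) m * 1\<^sub>m n)"
    using \<rho> by (simp add: mat_trace_mult_msum_mult)
  also have "\<dots> = mat_trace \<rho>" using \<rho> by (simp add: trace_preserving)
  finally show ?thesis .
qed

lemma mat_adjoint_kraus:
  assumes \<rho>: "\<rho> \<in> carrier_mat n n"
  shows "mat_adjoint (kraus \<rho>) = kraus (mat_adjoint \<rho>)"
proof -
  have "mat_adjoint (kraus \<rho>) = msum n (\<lambda>j. mat_adjoint (A j * \<rho> * mat_adjoint (A j))) m"
    unfolding kraus_def using \<rho> by (intro mat_adjoint_msum) simp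
  also have "\<dots> = kraus (mat_adjoint \<rho>)"
    unfolding kraus_def using \<rho> mat_adjoint_conj[OF kraus_operator_carrier \<rho>] by (intro msum_cong) simp
  finally show ?thesis .
qed

lemma kraus_one: "kraus (1\<^sub>m n) = 1\<^sub>m n"
proof -
  have "kraus (1\<^sub>m n) = msum n (\<lambda>j. A j * mat_adjoint (A j)) m"
    unfolding kraus_def by (rule msum_cong) (simp add: right_mult_one_mat[of _ n n])
  then show ?thesis using unital by simp
qed

lemma sum_hs_inner_right_factors:
  assumes \<rho>: "\<rho> \<in> carrier_mat n n"
  shows "(\<Sum>j<m. hs_inner (\<rho> * mat_adjoint (A j)) (\<rho> * mat_adjoint (A j))) = hs_inner \<rho> \<rho>"
proof -
  have "(\<Sum>j<m. hs_inner (\<rho> * mat_adjoint (A j)) (\<rho> * mat_adjoint (A j)))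
      = (\<Sum>j<m. mat_trace (\<rho> * (mat_adjoint (A j) * A j) * mat_adjoint \<rho>))"
  proof (intro sum.cong refl)
    fix j assume "j \<in> {..<m}"
    then have Aj: "A j \<in> carrier_mat n n" by simp
    have "hs_inner (\<rho> * mat_adjoint (A j)) (\<rho> * mat_adjoint (A j))
        = mat_trace (A j * mat_adjoint \<rho> * (\<rho> * mat_adjoint (A j)))"
      unfolding hs_inner_def using Aj \<rho> by (simp add: mat_adjoint_mult[of _ n n _ n])
    also have "\<dots> = mat_trace (\<rho> * mat_adjoint (A j) * (A j * mat_adjoint \<rho>))"
      using Aj \<rho> by (intro mat_trace_mult_comm[of _ n n]) simp_all
    also have "\<dots> = mat_trace (\<rho> * (mat_adjoint (A j) * A j) * mat_adjoint \<rho>)"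
      using Aj \<rho> by (simp add: assoc_mult_mat[of _ n n _ n _ n])
    finally show "hs_inner (\<rho> * mat_adjoint (A j)) (\<rho> * mat_adjoint (A j))
        = mat_trace (\<rho> * (mat_adjoint (A j) * A j) * mat_adjoint \<rho>)" .
  qed
  also have "\<dots> = mat_trace (\<rho> * msum n (\<lambda>j. mat_adjoint (A j) * A j) m * mat_adjoint \<rho>)"
    using \<rho> by (simp add: mat_trace_mult_msum_mult)
  also have "\<dots> = hs_inner \<rho> \<rho>"
    unfolding trace_preserving hs_inner_def using \<rho> by (simp add: mat_trace_mult_comm[of \<rho> n n])
  finally show ?thesis .
qed

lemma sum_hs_inner_left_factors:
  assumes Y: "Y \<in> carrier_mat n n"
  shows "(\<Sum>j<m. hs_inner (mat_adjoint (A j) * Y) (mat_adjoint (A j) * Y)) = hs_inner Y Y"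
proof -
  have "(\<Sum>j<m. hs_inner (mat_adjoint (A j) * Y) (mat_adjoint (A j) * Y))
      = (\<Sum>j<m. mat_trace (mat_adjoint Y * (A j * mat_adjoint (A j)) * Y))"
    unfolding hs_inner_def using Y
    by (intro sum.cong refl) (simp add: mat_adjoint_mult[of _ n n _ n] assoc_mult_mat[of _ n n _ n _ n])
  also have "\<dots> = mat_trace (mat_adjoint Y * msum n (\<lambda>j. A j * mat_adjoint (A j)) m * Y)"
    using Y by (simp add: mat_trace_mult_msum_mult)
  also have "\<dots> = hs_inner Y Y" unfolding unital hs_inner_def using Y by simp
  finally show ?thesis .
qed

lemma sum_hs_inner_mixed_factors:
  assumes \<rho>: "\<rho> \<in> carrier_mat n n" and Y: "Y \<in> carrier_mat n n"
  shows "(\<Sum>j<m. hs_inner (\<rho> * mat_adjoint (A j)) (mat_adjoint (A j) * Y)) = hs_inner (kraus \<rho>) Y"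
proof -
  have "(\<Sum>j<m. hs_inner (\<rho> * mat_adjoint (A j)) (mat_adjoint (A j) * Y))
      = (\<Sum>j<m. mat_trace (1\<^sub>m n * (A j * mat_adjoint \<rho> * mat_adjoint (A j)) * Y))"
    unfolding hs_inner_def using \<rho> Y
    by (intro sum.cong refl)
      (simp add: mat_adjoint_mult[of _ n n _ n] assoc_mult_mat[of _ n n _ n _ n] left_mult_one_mat[of _ n n])
  also have "\<dots> = mat_trace (1\<^sub>m n * kraus (mat_adjoint \<rho>) * Y)"
    unfolding kraus_def using \<rho> Y by (simp add: mat_trace_mult_msum_mult)
  also have "\<dots> = hs_inner (kraus \<rho>) Y"
    unfolding hs_inner_def using \<rho> by (simp add: mat_adjoint_kraus kraus_carrier left_mult_one_mat[of _ n n])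
  finally show ?thesis .
qed

text \<open>Expanding \<open>\<Sum>\<^sub>j \<parallel>\<rho> A\<^sub>j\<^sup>* - A\<^sub>j\<^sup>* D(\<rho>)\<parallel>\<^sup>2 \<ge> 0\<close> with the three sums above gives
  \<open>\<parallel>\<rho>\<parallel>\<^sup>2 - \<parallel>D(\<rho>)\<parallel>\<^sup>2 \<ge> 0\<close>.\<close>

lemma hs_inner_kraus_le:
  assumes \<rho>: "\<rho> \<in> carrier_mat n n"
  shows "Re (hs_inner (kraus \<rho>) (kraus \<rho>)) \<le> Re (hs_inner \<rho> \<rho>)"
proof -
  define Y where "Y = kraus \<rho>"
  have Y: "Y \<in> carrier_mat n n" unfolding Y_def using \<rho> by (rule kraus_carrier)
  define P where "P j = \<rho> * mat_adjoint (A j)" for j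
  define Q where "Q j = mat_adjoint (A j) * Y" for j
  have P: "j < m \<Longrightarrow> P j \<in> carrier_mat n n" for j unfolding P_def using \<rho> by simp
  have Q: "j < m \<Longrightarrow> Q j \<in> carrier_mat n n" for j unfolding Q_def using Y by simp
  have "0 \<le> (\<Sum>j<m. Re (hs_inner (P j - Q j) (P j - Q j)))"
    using P Q by (intro sum_nonneg hs_inner_self_nonneg[of _ n]) (simp add: minus_carrier_mat)
  also have "\<dots> = (\<Sum>j<m. Re (hs_inner (P j) (P j)) + Re (hs_inner (Q j) (Q j)) - 2 * Re (hs_inner (P j) (Q j)))"
    using P Q by (intro sum.cong refl) (simp add: hs_norm_diff[of _ n])
  also have "\<dots> = Re (\<Sum>j<m. hs_inner (P j) (P j)) + Re (\<Sum>j<m. hs_inner (Q j) (Q j))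
      - 2 * Re (\<Sum>j<m. hs_inner (P j) (Q j))"
    by (simp add: sum.distrib sum_subtractf sum_distrib_left)
  also have "\<dots> = Re (hs_inner \<rho> \<rho>) - Re (hs_inner Y Y)"
    unfolding P_def Q_def Y_def
    by (simp add: sum_hs_inner_right_factors[OF \<rho>] sum_hs_inner_left_factors[OF kraus_carrier[OF \<rho>]]
        sum_hs_inner_mixed_factors[OF \<rho> kraus_carrier[OF \<rho>]])
  finally show ?thesis unfolding Y_def by simp
qed

end

locale mixed_unitary_channel = unital_channel +
  fixes U :: "complex mat" and p q :: real
  assumes unitary: "unitary_op n U"
    and weights: "0 < p" "0 < q" "p + q = 1"
begin

definition mixture :: "complex mat \<Rightarrow> complex mat" where
  "mixture \<rho> = complex_of_real q \<cdot>\<^sub>m conj_by U \<rho> + complex_of_real p \<cdot>\<^sub>m kraus \<rho>"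

lemma mat_linear_mixture: "mat_linear n mixture"
  unfolding mixture_def[abs_def]
  by (rule mat_linear_lincomb[OF mat_linear_conj_by[OF unitary] mat_linear_kraus])

lemma weights_sum: "complex_of_real q + complex_of_real p = 1"
  using weights(3) by (metis add.commute of_real_1 of_real_add)

lemma mat_trace_mixture:
  assumes \<rho>: "\<rho> \<in> carrier_mat n n"
  shows "mat_trace (mixture \<rho>) = mat_trace \<rho>"
  unfolding mixture_def using \<rho> conj_by_carrier[OF unitary \<rho>] kraus_carrier[OF \<rho>]
  by (simp add: mat_trace_add[of _ n] mat_trace_smult[of _ n] mat_trace_conj_by[OF unitary]
      mat_trace_kraus distrib_right[symmetric] weights_sum)

lemma mixture_one: "mixture (1\<^sub>m n) = 1\<^sub>m n"
  unfolding mixture_def conj_by_one[OF unitary] kraus_one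
  by (rule eq_matI) (simp_all add: distrib_right[symmetric] weights_sum)

lemma kraus_eigenvector_if_mixture_unimodular:
  assumes \<rho>: "\<rho> \<in> carrier_mat n n" and eigen: "mixture \<rho> = c \<cdot>\<^sub>m \<rho>" and c: "cmod c = 1"
  shows "kraus \<rho> = c \<cdot>\<^sub>m \<rho>"
proof -
  have same: "conj_by U \<rho> = kraus \<rho>"
    using eigen[unfolded mixture_def, symmetric] c weights
    by (intro hs_convex_comb_unimodular_eq[OF conj_by_carrier[OF unitary \<rho>] kraus_carrier[OF \<rho>] \<rho>])
      (simp_all add: hs_inner_conj_by[OF unitary \<rho>] hs_inner_kraus_le[OF \<rho>])
  have "c \<cdot>\<^sub>m \<rho> = complex_of_real q \<cdot>\<^sub>m kraus \<rho> + complex_of_real p \<cdot>\<^sub>m kraus \<rho>"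
    using eigen same unfolding mixture_def by simp
  also have "\<dots> = kraus \<rho>"
    using kraus_carrier[OF \<rho>] by (intro eq_matI) (simp_all add: distrib_right[symmetric] weights_sum)
  finally show ?thesis by simp
qed

lemma so_eigenvalue_kraus_if_mixture:
  assumes "so_eigenvalue n mixture l" and "cmod l = 1"
  shows "so_eigenvalue n kraus l"
  using assms kraus_eigenvector_if_mixture_unimodular unfolding so_eigenvalue_def by blast

lemma alg_mult_mixture_one:
  assumes simple: "alg_mult n kraus 1 = 1"
  shows "alg_mult n mixture 1 = 1"
proof -
  have "0 < n" using alg_mult_le_square[of n kraus 1] simple by (cases n) auto
  then have one_nz: "1\<^sub>m n \<noteq> (0\<^sub>m n n :: complex mat)"
    by (metis index_one_mat(1) index_zero_mat(1) zero_neq_one)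
  have fixed_scalar: "\<exists>c. \<sigma> = c \<cdot>\<^sub>m 1\<^sub>m n" if \<sigma>: "\<sigma> \<in> carrier_mat n n" "mixture \<sigma> = \<sigma>" for \<sigma>
  proof -
    have "kraus \<sigma> = 1 \<cdot>\<^sub>m \<sigma>"
      using \<sigma> by (intro kraus_eigenvector_if_mixture_unimodular) simp_all
    moreover have "kraus (1\<^sub>m n) = 1 \<cdot>\<^sub>m 1\<^sub>m n" using kraus_one by simp
    moreover have "alg_mult n kraus 1 \<le> 1" using simple by simp
    ultimately show ?thesis
      using eigenvectors_proportional_if_alg_mult_le_1[OF mat_linear_kraus _ one_carrier_mat one_nz _ \<sigma>(1)]
      by blast
  qed
  show ?thesis
  proof (rule alg_mult_eq_1I[OF mat_linear_mixture one_carrier_mat one_nz])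
    show "mixture (1\<^sub>m n) = 1 \<cdot>\<^sub>m 1\<^sub>m n" using mixture_one by simp
  next
    fix X :: "complex mat"
    assume X: "X \<in> carrier_mat n n"
      and gen: "mixture (mixture X - 1 \<cdot>\<^sub>m X) - 1 \<cdot>\<^sub>m (mixture X - 1 \<cdot>\<^sub>m X) = 0\<^sub>m n n"
    have LX: "mixture X \<in> carrier_mat n n" using mat_linearD(1)[OF mat_linear_mixture X] .
    define \<sigma> where "\<sigma> = mixture X - X"
    have \<sigma>: "\<sigma> \<in> carrier_mat n n" unfolding \<sigma>_def using LX X by (simp add: minus_carrier_mat)
    have "mixture \<sigma> = \<sigma>"
      using gen minus_mat_eq_0_iff[OF mat_linearD(1)[OF mat_linear_mixture \<sigma>] \<sigma>] by (simp add: \<sigma>_def)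
    then obtain c where c: "\<sigma> = c \<cdot>\<^sub>m 1\<^sub>m n" using fixed_scalar[OF \<sigma>] by blast
    have "c * of_nat n = mat_trace \<sigma>" unfolding c by (simp add: mat_trace_smult[of _ n] mat_trace_one)
    also have "\<dots> = 0"
      unfolding \<sigma>_def using LX X by (simp add: mat_trace_minus[of _ n] mat_trace_mixture)
    finally have "c = 0" using \<open>0 < n\<close> by simp
    then have "mixture X - X = 0\<^sub>m n n" using c unfolding \<sigma>_def by (intro eq_matI) auto
    then have "mixture X = X" using minus_mat_eq_0_iff[OF LX X] by simp
    then show "\<exists>c. X = c \<cdot>\<^sub>m 1\<^sub>m n" by (rule fixed_scalar[OF X])
  qed
qed

end

theorem mainTheorem5:
  fixes n m :: nat and U :: "complex mat" and A :: "nat \<Rightarrow> complex mat"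
    and p q :: real and C D L :: "complex mat \<Rightarrow> complex mat"
  assumes U: "unitary_op n U"
    and A_carrier: "\<forall>j<m. A j \<in> carrier_mat n n"
    and A_tp: "msum n (\<lambda>j. mat_adjoint (A j) * A j) m = 1\<^sub>m n"
    and A_unital: "msum n (\<lambda>j. A j * mat_adjoint (A j)) m = 1\<^sub>m n"
    and pq: "0 < p" "p < 1" "0 < q" "q < 1" "p + q = 1"
    and C_def: "C = (\<lambda>\<rho>. U * \<rho> * mat_adjoint U)"
    and D_def: "D = (\<lambda>\<rho>. msum n (\<lambda>j. A j * \<rho> * mat_adjoint (A j)) m)"
    and L_def: "L = (\<lambda>\<rho>. complex_of_real q \<cdot>\<^sub>m C \<rho> + complex_of_real p \<cdot>\<^sub>m D \<rho>)"
  shows "((\<forall>l. so_eigenvalue n D l \<and> cmod l = 1 \<longrightarrow> l = 1)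
            \<longrightarrow> (\<forall>l. so_eigenvalue n L l \<and> cmod l = 1 \<longrightarrow> l = 1))
         \<and> (alg_mult n D 1 = 1 \<longrightarrow> alg_mult n L 1 = 1)"
proof -
  interpret mixed_unitary_channel n m A U p q
    using A_carrier A_tp A_unital U pq by unfold_locales auto
  have "D = kraus" unfolding D_def kraus_def ..
  moreover have "L = mixture" unfolding L_def C_def mixture_def conj_by_def \<open>D = kraus\<close> ..
  ultimately show ?thesis
    using so_eigenvalue_kraus_if_mixture alg_mult_mixture_one by blast
qed

end
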